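(* If $F$ is an apexed $\ell$-frame and $u,v\in V(F)$, then some hole of $F$ contains both $u$ and $v$.
   Context: A hole is an induced cycle of length at least four. A threshold graph is a graph with no induced four-vertex path, four-vertex cycle, or complement of a four-vertex cycle. $\ell$-frame for odd $\ell\ge5$: let $k\ge3$ and let $a_1,\dots,a_k,b_1,\dots,b_k$ be distinct vertices; for $1\le i\le k$ let $P_i$ be a path of length $(\ell-3)/2$ with ends $a_i,b_i$, pairwise vertex-disjoint. Let $A,B$ be graphs on $\{a_1,\dots,a_k\}$ and $\{b_1,\dots,b_k\}$ that are threshold graphs, with $b_ib_j$ an edge iff $a_ia_j$ is not an edge ($i<j$), each of $A,B$ either disconnected or two-connected. The $\ell$-frame is the union $A\cup B\cup P_1\cup\dots\cup P_k$ (no other edges). Exactly one of $A,B$ is disconnected; the apexed $\ell$-frame is obtained by adding a new vertex (the apex) adjacent exactly to all vertices of the disconnected one. $\ell$-frame for even $\ell\ge6$: let $m\ge0$, $n\ge2$, $m+n\ge3$, and let $a_1,\dots,a_n,c_1,\dots,c_m,b_1,\dots,b_n,d_1,\dots,d_m$ be distinct. $P_i$ ($1\le i\le n$) is a path of length $\ell/2-2$ between $a_i,b_i$; $Q_i$ ($1\le i\le m$) is a path of length $\ell/2-1$ between $c_i,d_i$; all pairwise vertex-disjoint. $A$ on $\{a_i\}\cup\{c_j\}$ and $B$ on $\{b_i\}\cup\{d_j\}$: $\{c_j\}$ and $\{d_j\}$ are cliques; $\{a_i\}$, $\{b_i\}$ are stable; the bipartite graph of $A$ between $\{a_i\}$ and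 $\{c_j\}$ has no induced two-edge matching; $b_id_j$ is an edge iff $a_ic_j$ is not; some $a_i$ has degree zero in $A$ and some $b_i$ has degree zero in $B$; no other edges. The $\ell$-frame is $A\cup B\cup P_1\cup\dots\cup P_n\cup Q_1\cup\dots\cup Q_m$. The apexed $\ell$-frame is obtained by adding two new vertices, one adjacent exactly to all vertices of $A$ and one adjacent exactly to all vertices of $B$. *)

theory Defs
  imports Main
begin

text \<open>Graphs are given by a vertex set V and an edge relation E on the vertex type.
Auxiliary graphs A, B of a frame are encoded as relations on the index set.\<close>

definition is_hole :: "'a set \<Rightarrow> ('a \<Rightarrow> 'a \<Rightarrow> bool) \<Rightarrow> 'a list \<Rightarrow> bool" where
  "is_hole V E cs \<longleftrightarrow> 4 \<le> length cs \<and> distinct cs \<and> set cs \<subseteq> V \<and>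
     (\<forall>i < length cs. \<forall>j < length cs.
        E (cs ! i) (cs ! j) \<longleftrightarrow> (j = Suc i mod length cs \<or> i = Suc j mod length cs))"

definition threshold_on :: "'i set \<Rightarrow> ('i \<Rightarrow> 'i \<Rightarrow> bool) \<Rightarrow> bool" where
  "threshold_on I R \<longleftrightarrow>
     (\<forall>a\<in>I. \<forall>b\<in>I. \<forall>c\<in>I. \<forall>d\<in>I. distinct [a, b, c, d] \<longrightarrow>
        \<not> (R a b \<and> R b c \<and> R c d \<and> \<not> R a c \<and> \<not> R b d \<and> \<not> R a d) \<and>
        \<not> (R a b \<and> R b c \<and> R c d \<and> R d a \<and> \<not> R a c \<and> \<not> R b d) \<and>
        \<not> (R a b \<and> R c d \<and> \<not> R a c \<and> \<not> R a d \<and> \<not> R b c \<and> \<not> R b d))"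

definition connected_on :: "'i set \<Rightarrow> ('i \<Rightarrow> 'i \<Rightarrow> bool) \<Rightarrow> bool" where
  "connected_on I R \<longleftrightarrow> (\<forall>x\<in>I. \<forall>y\<in>I. (x, y) \<in> {(p, q). p \<in> I \<and> q \<in> I \<and> R p q}\<^sup>*)"

definition two_connected_on :: "'i set \<Rightarrow> ('i \<Rightarrow> 'i \<Rightarrow> bool) \<Rightarrow> bool" where
  "two_connected_on I R \<longleftrightarrow> finite I \<and> 3 \<le> card I \<and> connected_on I R \<and>
     (\<forall>v\<in>I. connected_on (I - {v}) R)"

definition path_edge :: "'a list \<Rightarrow> 'a \<Rightarrow> 'a \<Rightarrow> bool" where
  "path_edge P x y \<longleftrightarrow> (\<exists>j. Suc j < length P \<and>
     ((x = P ! j \<and> y = P ! Suc j) \<or> (y = P ! j \<and> x = P ! Suc j)))"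

text \<open>Odd case: path i has vertex list P i from a_i = hd (P i) to b_i = last (P i);
RA i j means a_i a_j is an edge of A; B has b_i b_j iff not RA i j (i \<noteq> j).\<close>

definition odd_apexed_frame :: "nat \<Rightarrow> 'a set \<Rightarrow> ('a \<Rightarrow> 'a \<Rightarrow> bool) \<Rightarrow> bool" where
  "odd_apexed_frame l V E \<longleftrightarrow> odd l \<and> 5 \<le> l \<and>
    (\<exists>(k::nat) (P :: nat \<Rightarrow> 'a list) (RA :: nat \<Rightarrow> nat \<Rightarrow> bool) (RB :: nat \<Rightarrow> nat \<Rightarrow> bool) z.
       3 \<le> k \<and>
       (\<forall>i<k. length (P i) = (l - 3) div 2 + 1) \<and>
       distinct (concat (map P [0..<k]) @ [z]) \<and>
       (\<forall>i j. RA i j \<longrightarrow> i < k \<and> j < k \<and> i \<noteq> j) \<and>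
       (\<forall>i j. RA i j \<longrightarrow> RA j i) \<and>
       (\<forall>i j. RB i j \<longleftrightarrow> i < k \<and> j < k \<and> i \<noteq> j \<and> \<not> RA i j) \<and>
       threshold_on {..<k} RA \<and> threshold_on {..<k} RB \<and>
       (\<not> connected_on {..<k} RA \<or> two_connected_on {..<k} RA) \<and>
       (\<not> connected_on {..<k} RB \<or> two_connected_on {..<k} RB) \<and>
       V = insert z (\<Union>i<k. set (P i)) \<and>
       (\<forall>x y. E x y \<longleftrightarrow>
          (\<exists>i<k. path_edge (P i) x y) \<or>
          (\<exists>i<k. \<exists>j<k. RA i j \<and> x = hd (P i) \<and> y = hd (P j)) \<or>
          (\<exists>i<k. \<exists>j<k. RB i j \<and> x = last (P i) \<and> y = last (P j)) \<or>
          (\<exists>w. ((x = z \<and> y = w) \<or> (y = z \<and> x = w)) \<and>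
             ((\<not> connected_on {..<k} RA \<and> (\<exists>i<k. w = hd (P i))) \<or>
              (\<not> connected_on {..<k} RB \<and> (\<exists>i<k. w = last (P i)))))))"

text \<open>Even case: P i (i < n) from a_i = hd (P i) to b_i = last (P i), length l/2-2;
Q j (j < m) from c_j = hd (Q j) to d_j = last (Q j), length l/2-1;
R i j means a_i c_j is an edge of A; b_i d_j is an edge of B iff not R i j.
za is the apex of A, zb the apex of B.\<close>

definition even_apexed_frame :: "nat \<Rightarrow> 'a set \<Rightarrow> ('a \<Rightarrow> 'a \<Rightarrow> bool) \<Rightarrow> bool" where
  "even_apexed_frame l V E \<longleftrightarrow> even l \<and> 6 \<le> l \<and>
    (\<exists>(n::nat) (m::nat) (P :: nat \<Rightarrow> 'a list) (Q :: nat \<Rightarrow> 'a list) (R :: nat \<Rightarrow> nat \<Rightarrow> bool) za zb.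
       2 \<le> n \<and> 3 \<le> m + n \<and>
       (\<forall>i<n. length (P i) = (l div 2 - 2) + 1) \<and>
       (\<forall>j<m. length (Q j) = (l div 2 - 1) + 1) \<and>
       distinct (concat (map P [0..<n]) @ concat (map Q [0..<m]) @ [za, zb]) \<and>
       (\<forall>i<n. \<forall>i'<n. \<forall>j<m. \<forall>j'<m. i \<noteq> i' \<and> j \<noteq> j' \<longrightarrow>
          \<not> (R i j \<and> R i' j' \<and> \<not> R i j' \<and> \<not> R i' j)) \<and>
       (\<exists>i<n. \<forall>j<m. \<not> R i j) \<and>
       (\<exists>i<n. \<forall>j<m. R i j) \<and>
       V = {za, zb} \<union> (\<Union>i<n. set (P i)) \<union> (\<Union>j<m. set (Q j)) \<and>
       (\<forall>x y. E x y \<longleftrightarrow>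
          (\<exists>i<n. path_edge (P i) x y) \<or>
          (\<exists>j<m. path_edge (Q j) x y) \<or>
          (\<exists>j<m. \<exists>j'<m. j \<noteq> j' \<and> x = hd (Q j) \<and> y = hd (Q j')) \<or>
          (\<exists>j<m. \<exists>j'<m. j \<noteq> j' \<and> x = last (Q j) \<and> y = last (Q j')) \<or>
          (\<exists>i<n. \<exists>j<m. R i j \<and>
             ((x = hd (P i) \<and> y = hd (Q j)) \<or> (y = hd (P i) \<and> x = hd (Q j)))) \<or>
          (\<exists>i<n. \<exists>j<m. \<not> R i j \<and>
             ((x = last (P i) \<and> y = last (Q j)) \<or> (y = last (P i) \<and> x = last (Q j)))) \<or>
          (\<exists>w. ((x = za \<and> y = w) \<or> (y = za \<and> x = w)) \<and>
             w \<in> (\<lambda>i. hd (P i)) ` {..<n} \<union> (\<lambda>j. hd (Q j)) ` {..<m}) \<or>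
          (\<exists>w. ((x = zb \<and> y = w) \<or> (y = zb \<and> x = w)) \<and>
             w \<in> (\<lambda>i. last (P i)) ` {..<n} \<union> (\<lambda>j. last (Q j)) ` {..<m})))"

definition apexed_frame :: "nat \<Rightarrow> 'a set \<Rightarrow> ('a \<Rightarrow> 'a \<Rightarrow> bool) \<Rightarrow> bool" where
  "apexed_frame l V E \<longleftrightarrow> odd_apexed_frame l V E \<or> even_apexed_frame l V E"

end

theory Submission
  imports Defs
begin

(* Concatenating whole paths, some of them reversed, and single
   end vertices yields a cycle, and this cycle is a hole as soon as the only edges among the ends
   of its pieces are the junctions of consecutive pieces. It remains to find such cycles through
   any two paths and through a path and an apex.
   Odd frames: a connected threshold graph has a dominating vertex, which is isolated in the
   complement, so exactly one of A and B is disconnected; reversing all paths we may assume it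
   is A, whose vertices see the apex. Then B is a connected threshold graph, so two non-adjacent
   vertices of B have a common neighbour. If b_i b_j is an edge, apex-P_i-P_j is a hole;
   otherwise a_i a_j is an edge and P_i-b_t-P_j is a hole for a common neighbour b_t of b_i, b_j.
   Even frames: the holes are apex-P_i-apex-P_i', Q_j-Q_j', P_i-apex-Q_j if a_i c_j is an edge
   and apex-Q_j-P_i if not; an a_i isolated in A and a b_i isolated in B put each apex on a hole
   through any given Q_j. *)

section \<open>Paths, cycles and holes\<close>

lemma hd_neq_last: "2 \<le> length xs \<Longrightarrow> distinct xs \<Longrightarrow> hd xs \<noteq> last xs"
  by (cases xs rule: rev_cases) (auto simp: hd_append)

lemma last_concat: "xs \<noteq> [] \<Longrightarrow> last xs \<noteq> [] \<Longrightarrow> last (concat xs) = last (last xs)"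
  by (induction xs) (auto simp: last_append)

lemma distinct_concat_map_upt:
  assumes "distinct (concat (map P [0..<k]))" and "i < k"
  shows "distinct (P i) \<and> (\<forall>j<k. \<forall>x\<in>set (P i). x \<in> set (P j) \<longrightarrow> i = j)"
  using assms
proof (induction k arbitrary: i)
  case (Suc k)
  have IH: "distinct (P i) \<and> (\<forall>j<k. \<forall>x\<in>set (P i). x \<in> set (P j) \<longrightarrow> i = j)" if "i < k" for i
    using Suc.IH[OF _ that] Suc.prems(1) by simp
  have "(\<Union>a\<in>{0..<k}. set (P a)) \<inter> set (P k) = {}" and last: "distinct (P k)"
    using Suc.prems(1) by simp_all
  then have "x \<notin> set (P k)" if "i < k" "x \<in> set (P i)" for i x
    using that by (auto simp: atLeast0LessThan)
  then show ?case
    using IH last Suc.prems(2) less_Suc_eq by metis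
qed simp

lemma path_edge_Nil [simp]: "\<not> path_edge [] x y"
  unfolding path_edge_def by auto

lemma path_edge_Cons:
  "path_edge (a # xs) x y \<longleftrightarrow>
     (xs \<noteq> [] \<and> ((x = a \<and> y = hd xs) \<or> (y = a \<and> x = hd xs))) \<or> path_edge xs x y"
proof
  assume "path_edge (a # xs) x y"
  then obtain j where "Suc j < length (a # xs)"
    "(x = (a # xs) ! j \<and> y = (a # xs) ! Suc j) \<or> (y = (a # xs) ! j \<and> x = (a # xs) ! Suc j)"
    unfolding path_edge_def by blast
  then show "(xs \<noteq> [] \<and> ((x = a \<and> y = hd xs) \<or> (y = a \<and> x = hd xs))) \<or> path_edge xs x y"
    unfolding path_edge_def by (cases j) (auto simp: hd_conv_nth)
next
  assume "(xs \<noteq> [] \<and> ((x = a \<and> y = hd xs) \<or> (y = a \<and> x = hd xs))) \<or> path_edge xs x y"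
  then show "path_edge (a # xs) x y"
  proof
    assume "xs \<noteq> [] \<and> ((x = a \<and> y = hd xs) \<or> (y = a \<and> x = hd xs))"
    then show ?thesis
      unfolding path_edge_def by (intro exI[of _ 0]) (auto simp: hd_conv_nth)
  next
    assume "path_edge xs x y"
    then show ?thesis
      unfolding path_edge_def by (metis Suc_less_eq length_Cons nth_Cons_Suc)
  qed
qed

lemma path_edge_singleton [simp]: "\<not> path_edge [a] x y"
  by (simp add: path_edge_Cons)

lemma path_edge_append:
  assumes "xs \<noteq> []" "ys \<noteq> []"
  shows "path_edge (xs @ ys) x y \<longleftrightarrow> path_edge xs x y \<or> path_edge ys x y \<or>
     (x = last xs \<and> y = hd ys) \<or> (y = last xs \<and> x = hd ys)"
  using assms
proof (induction xs)
  case (Cons a xs)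
  then show ?case
    by (cases "xs = []") (auto simp: path_edge_Cons)
qed simp

lemma path_edge_rev [simp]: "path_edge (rev xs) x y = path_edge xs x y"
proof (induction xs)
  case (Cons a xs)
  then show ?case
    by (cases "xs = []") (auto simp: path_edge_append path_edge_Cons hd_rev last_rev)
qed simp

lemma path_edge_in_set: "path_edge xs x y \<Longrightarrow> x \<in> set xs \<and> y \<in> set xs"
  unfolding path_edge_def by auto

lemma path_edge_nth_iff:
  assumes "distinct xs" "i < length xs" "j < length xs"
  shows "path_edge xs (xs ! i) (xs ! j) \<longleftrightarrow> j = Suc i \<or> i = Suc j"
  using assms nth_eq_iff_index_eq[OF assms(1)] unfolding path_edge_def
  by (metis Suc_lessD)

lemma path_edge_irrefl: "distinct xs \<Longrightarrow> \<not> path_edge xs x x"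
  unfolding path_edge_def by (metis Suc_lessD n_not_Suc_n nth_eq_iff_index_eq)

lemma is_holeI:
  assumes "distinct cs" and "4 \<le> length cs" and "set cs \<subseteq> V"
    and "\<And>x y. x \<in> set cs \<Longrightarrow> y \<in> set cs \<Longrightarrow>
      E x y \<longleftrightarrow> path_edge cs x y \<or> (x = hd cs \<and> y = last cs) \<or> (y = hd cs \<and> x = last cs)"
  shows "is_hole V E cs"
  unfolding is_hole_def
proof (intro conjI allI impI assms(1-3))
  fix i j assume i: "i < length cs" and j: "j < length cs"
  have "cs \<noteq> []" using assms(2) by auto
  then have ends: "hd cs = cs ! 0" "last cs = cs ! (length cs - 1)"
    by (simp_all add: hd_conv_nth last_conv_nth)
  have "E (cs ! i) (cs ! j) \<longleftrightarrow> (j = Suc i \<or> i = Suc j) \<or>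
      (i = 0 \<and> j = length cs - 1) \<or> (j = 0 \<and> i = length cs - 1)"
    using assms(4)[of "cs ! i" "cs ! j"] path_edge_nth_iff[OF assms(1) i j] i j ends
      nth_eq_iff_index_eq[OF assms(1)] by (metis diff_less length_pos_if_in_set nth_mem zero_less_one)
  also have "\<dots> \<longleftrightarrow> j = Suc i mod length cs \<or> i = Suc j mod length cs"
    using i j assms(2) by (auto simp: mod_Suc)
  finally show "E (cs ! i) (cs ! j) \<longleftrightarrow> j = Suc i mod length cs \<or> i = Suc j mod length cs" .
qed

fun joins :: "'a list list \<Rightarrow> 'a \<Rightarrow> 'a \<Rightarrow> bool" where
  "joins (b # c # bs) x y \<longleftrightarrow> (x = last b \<and> y = hd c) \<or> joins (c # bs) x y"
| "joins _ x y \<longleftrightarrow> False"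

lemma joins_snoc:
  "bs \<noteq> [] \<Longrightarrow> joins (bs @ [c]) x y \<longleftrightarrow> joins bs x y \<or> (x = last (last bs) \<and> y = hd c)"
  by (induction bs x y rule: joins.induct) auto

lemma joins_ends: "joins bs x y \<Longrightarrow> x \<in> last ` set bs \<and> y \<in> hd ` set bs"
  by (induction bs x y rule: joins.induct) auto

lemma path_edge_concat:
  assumes "[] \<notin> set bs"
  shows "path_edge (concat bs) x y \<longleftrightarrow> (\<exists>b\<in>set bs. path_edge b x y) \<or> symclp (joins bs) x y"
  using assms
proof (induction bs x y rule: joins.induct)
  case (1 b c bs x y)
  then show ?case
    by (auto simp: path_edge_append symclp_def)
qed (auto simp: symclp_def)

locale linked_paths =
  fixes paths :: "'a list set" and link :: "'a \<Rightarrow> 'a \<Rightarrow> bool" and E :: "'a \<Rightarrow> 'a \<Rightarrow> bool"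
  assumes distinct_paths: "p \<in> paths \<Longrightarrow> distinct p"
    and paths_nonempty: "p \<in> paths \<Longrightarrow> p \<noteq> []"
    and paths_disjoint: "p \<in> paths \<Longrightarrow> q \<in> paths \<Longrightarrow> x \<in> set p \<Longrightarrow> x \<in> set q \<Longrightarrow> p = q"
    and link_at_ends: "link x y \<Longrightarrow> p \<in> paths \<Longrightarrow> w \<in> {x, y} \<Longrightarrow> w \<in> set p \<Longrightarrow>
      w = hd p \<or> w = last p"
    and E_iff: "E x y \<longleftrightarrow> (\<exists>p\<in>paths. path_edge p x y) \<or> link x y"
begin

definition path_blocks :: "'a list list \<Rightarrow> bool" where
  "path_blocks bs \<longleftrightarrow> (\<forall>b\<in>set bs. (\<exists>p\<in>paths. b = p \<or> b = rev p) \<or>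
     (\<exists>a. b = [a] \<and> (\<forall>p\<in>paths. a \<in> set p \<longrightarrow> set p \<inter> set (concat bs) \<subseteq> {a})))"

lemma path_blocks_nonempty: "path_blocks bs \<Longrightarrow> [] \<notin> set bs"
  unfolding path_blocks_def using paths_nonempty by fastforce

lemma path_edge_on_blocks:
  assumes "path_blocks bs" and "x \<in> set (concat bs)" and "y \<in> set (concat bs)"
  shows "(\<exists>p\<in>paths. path_edge p x y) \<longleftrightarrow> (\<exists>b\<in>set bs. path_edge b x y)"
proof
  assume "\<exists>p\<in>paths. path_edge p x y"
  then obtain p where p: "p \<in> paths" "path_edge p x y" by blast
  then have "x \<noteq> y" using distinct_paths path_edge_irrefl by metis
  have xy: "x \<in> set p" "y \<in> set p" using path_edge_in_set[OF p(2)] by auto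
  obtain b where b: "b \<in> set bs" "x \<in> set b" using assms(2) by auto
  with assms(1) consider q where "q \<in> paths" "b = q \<or> b = rev q"
    | a where "b = [a]" "\<forall>p\<in>paths. a \<in> set p \<longrightarrow> set p \<inter> set (concat bs) \<subseteq> {a}"
    unfolding path_blocks_def by blast
  then have "b = p \<or> b = rev p"
  proof cases
    case (1 q)
    then show ?thesis using paths_disjoint[OF p(1), of q x] xy b(2) by auto
  next
    case (2 a)
    then show ?thesis using p(1) xy b(2) assms(3) \<open>x \<noteq> y\<close> by auto
  qed
  then show "\<exists>b\<in>set bs. path_edge b x y" using b p by (metis path_edge_rev)
next
  assume "\<exists>b\<in>set bs. path_edge b x y"
  then show "\<exists>p\<in>paths. path_edge p x y"
    using assms(1) unfolding path_blocks_def by fastforce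
qed

lemma link_on_blocks:
  assumes "path_blocks bs" and "x \<in> set (concat bs)" and "link x y \<or> link y x"
  shows "x \<in> hd ` set bs \<union> last ` set bs"
proof -
  obtain b where b: "b \<in> set bs" "x \<in> set b" using assms(2) by auto
  then have "x = hd b \<or> x = last b"
    using assms(1,3) link_at_ends unfolding path_blocks_def by (fastforce simp: hd_rev last_rev)
  then show ?thesis using b(1) by blast
qed

lemma is_hole_concat_blocks:
  assumes blocks: "path_blocks bs" and "bs \<noteq> []"
    and cycle: "distinct (concat bs)" "4 \<le> length (concat bs)" "set (concat bs) \<subseteq> V"
    and links: "\<forall>x\<in>hd ` set bs \<union> last ` set bs. \<forall>y\<in>hd ` set bs \<union> last ` set bs.
      link x y \<longleftrightarrow> symclp (joins (bs @ [hd bs])) x y"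
  shows "is_hole V E (concat bs)"
proof (rule is_holeI[OF cycle])
  fix x y assume x: "x \<in> set (concat bs)" and y: "y \<in> set (concat bs)"
  have nonempty: "[] \<notin> set bs" using path_blocks_nonempty[OF blocks] .
  then have ends: "hd (concat bs) = hd (hd bs)" "last (concat bs) = last (last bs)"
    using \<open>bs \<noteq> []\<close> hd_concat last_concat by (metis hd_in_set last_in_set)+
  have "link x y \<longleftrightarrow> symclp (joins (bs @ [hd bs])) x y"
  proof (cases "x \<in> hd ` set bs \<union> last ` set bs \<and> y \<in> hd ` set bs \<union> last ` set bs")
    case True
    then show ?thesis using links by blast
  next
    case False
    then have "\<not> link x y" using link_on_blocks[OF blocks] x y by blast
    moreover have "\<not> symclp (joins (bs @ [hd bs])) x y"
      using False joins_ends[of "bs @ [hd bs]"] \<open>bs \<noteq> []\<close> by (auto simp: symclp_def)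
    ultimately show ?thesis by blast
  qed
  then show "E x y \<longleftrightarrow> path_edge (concat bs) x y \<or>
      (x = hd (concat bs) \<and> y = last (concat bs)) \<or> (y = hd (concat bs) \<and> x = last (concat bs))"
    unfolding E_iff path_edge_on_blocks[OF blocks x y] path_edge_concat[OF nonempty] ends
    using joins_snoc[OF \<open>bs \<noteq> []\<close>] by (auto simp: symclp_def)
qed

end

section \<open>Connectivity and threshold graphs\<close>

lemma connected_onE_neighbour:
  assumes "connected_on I R" "x \<in> I" "y \<in> I" "x \<noteq> y"
  obtains w where "R x w"
proof -
  have "(x, y) \<in> {(p, q). p \<in> I \<and> q \<in> I \<and> R p q}\<^sup>*"
    using assms unfolding connected_on_def by blast
  then show ?thesis using assms(4) that by (cases rule: converse_rtranclE) auto
qed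

lemma connected_on_complement:
  assumes "\<not> connected_on I R" and sym: "\<And>x y. R x y \<Longrightarrow> R y x"
    and complement: "\<And>x y. x \<in> I \<Longrightarrow> y \<in> I \<Longrightarrow> x \<noteq> y \<Longrightarrow> \<not> R x y \<Longrightarrow> S x y"
  shows "connected_on I S"
  unfolding connected_on_def
proof (intro ballI)
  fix x y assume x: "x \<in> I" and y: "y \<in> I"
  let ?R = "{(p, q). p \<in> I \<and> q \<in> I \<and> R p q}"
  let ?S = "{(p, q). p \<in> I \<and> q \<in> I \<and> S p q}"
  have sym_R: "sym (?R\<^sup>*)" by (rule sym_rtrancl) (auto simp: sym_def sym)
  obtain p q where pq: "p \<in> I" "q \<in> I" "(p, q) \<notin> ?R\<^sup>*"
    using assms(1) unfolding connected_on_def by blast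
  obtain w where w: "w \<in> I" "(x, w) \<notin> ?R\<^sup>*"
  proof (cases "(x, p) \<in> ?R\<^sup>*")
    case True
    then have "(x, q) \<notin> ?R\<^sup>*"
      using pq(3) sym_R by (meson rtrancl_trans symD)
    then show ?thesis using that pq(2) by blast
  next
    case False
    then show ?thesis using that pq(1) by blast
  qed
  show "(x, y) \<in> ?S\<^sup>*"
  proof (cases "x = y \<or> \<not> R x y")
    case True
    then show ?thesis using complement[OF x y] x y by auto
  next
    case False
    \<comment> \<open>then x-w-y is a path of S, since w lies in another component of R than x and y\<close>
    then have "(x, y) \<in> ?R" using x y by blast
    have "(y, w) \<notin> ?R\<^sup>*"
    proof
      assume "(y, w) \<in> ?R\<^sup>*"
      with \<open>(x, y) \<in> ?R\<close> have "(x, w) \<in> ?R\<^sup>*" by (rule converse_rtrancl_into_rtrancl)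
      with w(2) show False ..
    qed
    then have "w \<noteq> x" "\<not> R x w" "w \<noteq> y" "\<not> R w y"
      using w x y sym[of w y] by auto
    then have "(x, w) \<in> ?S" "(w, y) \<in> ?S"
      using complement[OF x w(1)] complement[OF w(1) y] w(1) x y by auto
    then show ?thesis by (meson r_into_rtrancl rtrancl_trans)
  qed
qed

locale threshold_graph =
  fixes I :: "'i set" and R :: "'i \<Rightarrow> 'i \<Rightarrow> bool"
  assumes edge_ends: "R x y \<Longrightarrow> x \<in> I \<and> y \<in> I \<and> x \<noteq> y"
    and edge_sym: "R x y \<Longrightarrow> R y x"
    and threshold: "threshold_on I R"
begin

lemma no_induced_P4:
  "a \<in> I \<Longrightarrow> b \<in> I \<Longrightarrow> c \<in> I \<Longrightarrow> d \<in> I \<Longrightarrow> distinct [a, b, c, d] \<Longrightarrow>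
    R a b \<Longrightarrow> R b c \<Longrightarrow> R c d \<Longrightarrow> R a c \<or> R b d \<or> R a d"
  using threshold unfolding threshold_on_def by blast

lemma no_induced_C4:
  "a \<in> I \<Longrightarrow> b \<in> I \<Longrightarrow> c \<in> I \<Longrightarrow> d \<in> I \<Longrightarrow> distinct [a, b, c, d] \<Longrightarrow>
    R a b \<Longrightarrow> R b c \<Longrightarrow> R c d \<Longrightarrow> R d a \<Longrightarrow> R a c \<or> R b d"
  using threshold unfolding threshold_on_def by blast

lemma no_induced_2K2:
  "a \<in> I \<Longrightarrow> b \<in> I \<Longrightarrow> c \<in> I \<Longrightarrow> d \<in> I \<Longrightarrow> distinct [a, b, c, d] \<Longrightarrow>
    R a b \<Longrightarrow> R c d \<Longrightarrow> R a c \<or> R a d \<or> R b c \<or> R b d"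
  using threshold unfolding threshold_on_def by blast

lemma common_neighbour:
  assumes "connected_on I R" and "x \<in> I" and "y \<in> I" and "x \<noteq> y" and "\<not> R x y"
  obtains w where "R x w" and "R w y"
proof -
  have "(x, y) \<in> {(p, q). p \<in> I \<and> q \<in> I \<and> R p q}\<^sup>*"
    using assms unfolding connected_on_def by blast
  \<comment> \<open>along an R-walk from x no vertex gets at distance three: this would need an induced P4\<close>
  then have "y = x \<or> R x y \<or> (\<exists>w. R x w \<and> R w y)"
  proof (induction rule: rtrancl_induct)
    case (step y y')
    then have "R y y'" by simp
    show ?case
    proof (cases "y' = x \<or> R x y' \<or> y = x \<or> R x y")
      case True
      then show ?thesis using \<open>R y y'\<close> by blast
    next
      case False
      with step.IH obtain w where w: "R x w" "R w y" by blast
      have "distinct [x, w, y, y']"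
        using False w \<open>R y y'\<close> edge_ends by auto
      then have "R w y'"
        using no_induced_P4[of x w y y'] False w \<open>R y y'\<close> edge_ends by blast
      then show ?thesis using w(1) by blast
    qed
  qed simp
  then show ?thesis using assms(4,5) that by blast
qed

lemma neighbourhoods_nested:
  "(\<forall>a. R x a \<and> a \<noteq> y \<longrightarrow> R y a) \<or> (\<forall>b. R y b \<and> b \<noteq> x \<longrightarrow> R x b)"
proof (rule ccontr)
  assume "\<not> ?thesis"
  then obtain a b where a: "R x a" "a \<noteq> y" "\<not> R y a" and b: "R y b" "b \<noteq> x" "\<not> R x b"
    by blast
  have I: "x \<in> I" "y \<in> I" "a \<in> I" "b \<in> I" using a b edge_ends by auto
  have "a \<noteq> x" "b \<noteq> y" "a \<noteq> b" "x \<noteq> y" using a b edge_ends by auto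
  then have "distinct [x, a, b, y]" "distinct [a, x, y, b]" "distinct [x, a, y, b]"
    using a b by auto
  have nonadjacent: "\<not> R a y" "\<not> R b x" using a b edge_sym by blast+
  have "\<not> (R x y \<and> R a b)"
    using no_induced_C4[OF I(1,3,4,2) \<open>distinct [x, a, b, y]\<close>] a b nonadjacent edge_sym by blast
  moreover have "\<not> (R x y \<and> \<not> R a b)"
    using no_induced_P4[OF I(3,1,2,4) \<open>distinct [a, x, y, b]\<close>] a b nonadjacent edge_sym by blast
  moreover have "\<not> (\<not> R x y \<and> R a b)"
    using no_induced_P4[OF I(1,3,4,2) \<open>distinct [x, a, b, y]\<close>] a b nonadjacent edge_sym by blast
  moreover have "\<not> (\<not> R x y \<and> \<not> R a b)"
    using no_induced_2K2[OF I(1,3,2,4) \<open>distinct [x, a, y, b]\<close>] a b nonadjacent edge_sym by blast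
  ultimately show False by blast
qed

lemma dominating_vertex:
  assumes "finite I" and "I \<noteq> {}" and "connected_on I R"
  obtains v where "v \<in> I" and "\<And>w. w \<in> I \<Longrightarrow> w \<noteq> v \<Longrightarrow> R v w"
proof -
  define N where "N v = {a \<in> I. R v a}" for v
  have finite_N: "finite (N v)" for v using assms(1) unfolding N_def by auto
  obtain v where v: "v \<in> I" and max: "Max ((\<lambda>v. card (N v)) ` I) = card (N v)"
    using obtains_MAX[OF assms(1,2)] by blast
  \<comment> \<open>a non-neighbour w of v would give a common neighbour c with N c \<supseteq> (N v - {c}) \<union> {v, w}\<close>
  have "R v w" if w: "w \<in> I" "w \<noteq> v" for w
  proof (rule ccontr)
    assume "\<not> R v w"
    then obtain c where c: "R v c" "R c w"
      using common_neighbour[OF assms(3) v w(1)] w(2) by metis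
    have "\<forall>a. R v a \<and> a \<noteq> c \<longrightarrow> R c a"
      using neighbourhoods_nested[of v c] c \<open>\<not> R v w\<close> w(2) by blast
    then have "insert v (insert w (N v - {c})) \<subseteq> N c"
      using c v w edge_sym edge_ends unfolding N_def by blast
    moreover have "card (insert v (insert w (N v - {c}))) = Suc (Suc (card (N v - {c})))"
    proof -
      have "w \<notin> N v - {c}" "v \<notin> insert w (N v - {c})"
        using \<open>\<not> R v w\<close> w(2) edge_ends[of v v] unfolding N_def by auto
      then show ?thesis using finite_N by simp
    qed
    moreover have "Suc (card (N v - {c})) = card (N v)"
      using c(1) edge_ends[OF c(1)] finite_N card.remove unfolding N_def by fastforce
    ultimately have "card (N v) < card (N c)"
      using card_mono[OF finite_N] by (metis Suc_le_lessD)
    moreover have "card (N c) \<le> card (N v)"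
      using edge_ends[OF c(1)] assms(1) max[symmetric] by simp
    ultimately show False by simp
  qed
  then show ?thesis using that v by blast
qed

lemma complement_connected_iff:
  assumes "finite I" and "2 \<le> card I"
    and complement: "\<And>x y. S x y \<longleftrightarrow> x \<in> I \<and> y \<in> I \<and> x \<noteq> y \<and> \<not> R x y"
  shows "connected_on I S \<longleftrightarrow> \<not> connected_on I R"
proof
  assume S_connected: "connected_on I S"
  show "\<not> connected_on I R"
  proof
    assume "connected_on I R"
    moreover have "I \<noteq> {}" using assms(2) by auto
    ultimately obtain v where v: "v \<in> I" "\<And>w. w \<in> I \<Longrightarrow> w \<noteq> v \<Longrightarrow> R v w"
      using dominating_vertex[OF assms(1)] by metis
    have "card (I - {v}) \<noteq> 0" using assms(1,2) v(1) by simp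
    then have "I - {v} \<noteq> {}" by (metis card.empty)
    then obtain w where "w \<in> I" "w \<noteq> v" by blast
    then obtain y where "S v y" using S_connected v(1) by (auto elim: connected_onE_neighbour)
    then show False using v complement by auto
  qed
next
  assume "\<not> connected_on I R"
  then show "connected_on I S"
    using connected_on_complement edge_sym complement by metis
qed

end

section \<open>Odd frames\<close>

locale odd_frame =
  fixes k :: nat and P :: "nat \<Rightarrow> 'a list" and RA RB :: "nat \<Rightarrow> nat \<Rightarrow> bool" and z :: 'a
    and V :: "'a set" and E :: "'a \<Rightarrow> 'a \<Rightarrow> bool"
  assumes two_paths: "2 \<le> k"
    and P_length: "i < k \<Longrightarrow> 2 \<le> length (P i)"
    and P_distinct: "i < k \<Longrightarrow> distinct (P i)"
    and P_disjoint: "i < k \<Longrightarrow> j < k \<Longrightarrow> x \<in> set (P i) \<Longrightarrow> x \<in> set (P j) \<Longrightarrow> i = j"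
    and apex_off_P: "i < k \<Longrightarrow> z \<notin> set (P i)"
    and RA_edge: "RA i j \<Longrightarrow> i < k \<and> j < k \<and> i \<noteq> j"
    and RA_sym: "RA i j \<Longrightarrow> RA j i"
    and RB_iff: "RB i j \<longleftrightarrow> i < k \<and> j < k \<and> i \<noteq> j \<and> \<not> RA i j"
    and B_threshold: "threshold_on {..<k} RB"
    and B_connected: "connected_on {..<k} RB"
    and V_eq: "V = insert z (\<Union>i<k. set (P i))"
    and E_iff: "E x y \<longleftrightarrow> (\<exists>i<k. path_edge (P i) x y) \<or>
      (\<exists>i<k. \<exists>j<k. RA i j \<and> x = hd (P i) \<and> y = hd (P j)) \<or>
      (\<exists>i<k. \<exists>j<k. RB i j \<and> x = last (P i) \<and> y = last (P j)) \<or>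
      (\<exists>i<k. (x = z \<and> y = hd (P i)) \<or> (y = z \<and> x = hd (P i)))"
begin

definition link :: "'a \<Rightarrow> 'a \<Rightarrow> bool" where
  "link x y \<longleftrightarrow> (\<exists>i<k. \<exists>j<k. RA i j \<and> x = hd (P i) \<and> y = hd (P j)) \<or>
      (\<exists>i<k. \<exists>j<k. RB i j \<and> x = last (P i) \<and> y = last (P j)) \<or>
      (\<exists>i<k. (x = z \<and> y = hd (P i)) \<or> (y = z \<and> x = hd (P i)))"

lemma RB_sym: "RB i j \<Longrightarrow> RB j i"
  using RA_sym RB_iff by blast

lemma RA_irrefl [simp]: "\<not> RA i i" and RB_irrefl [simp]: "\<not> RB i i"
  using RA_edge RB_iff by blast+

interpretation B: threshold_graph "{..<k}" RB
  using B_threshold RB_sym by unfold_locales (auto simp: RB_iff)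

lemma P_nonempty: "i < k \<Longrightarrow> P i \<noteq> []"
  using P_length[of i] by auto

lemma P_ends_in_P_iff [simp]:
  assumes "i < k" "j < k"
  shows "hd (P i) \<in> set (P j) \<longleftrightarrow> i = j" "last (P i) \<in> set (P j) \<longleftrightarrow> i = j"
  using assms P_disjoint[of i j] hd_in_set[OF P_nonempty] last_in_set[OF P_nonempty] by blast+

lemma P_ends_eq_iff [simp]:
  assumes "i < k" "j < k"
  shows "hd (P i) = hd (P j) \<longleftrightarrow> i = j" "last (P i) = last (P j) \<longleftrightarrow> i = j"
    and "hd (P i) \<noteq> last (P j)"
  using P_ends_in_P_iff[OF assms] hd_in_set[OF P_nonempty[OF assms(2)]]
    last_in_set[OF P_nonempty[OF assms(2)]] hd_neq_last[OF P_length[OF assms(2)] P_distinct[OF assms(2)]]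
  by auto

lemma apex_neq_P_ends: "i < k \<Longrightarrow> hd (P i) \<noteq> z" "i < k \<Longrightarrow> last (P i) \<noteq> z"
  using apex_off_P[of i] P_nonempty[of i] by auto

lemmas ends_distinct [simp] =
  P_ends_eq_iff(3)[symmetric] apex_neq_P_ends apex_neq_P_ends[symmetric]

lemma link_P_P [simp]:
  assumes "i < k" "j < k"
  shows "link (hd (P i)) (hd (P j)) \<longleftrightarrow> RA i j" "link (last (P i)) (last (P j)) \<longleftrightarrow> RB i j"
    and "\<not> link (hd (P i)) (last (P j))" "\<not> link (last (P i)) (hd (P j))"
  using assms unfolding link_def by (auto dest: RA_edge simp: RB_iff)

lemma link_apex [simp]:
  assumes "i < k"
  shows "link z (hd (P i))" "link (hd (P i)) z"
    and "\<not> link z (last (P i))" "\<not> link (last (P i)) z" "\<not> link z z"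
  using assms unfolding link_def by (auto dest: RA_edge simp: RB_iff)

sublocale linked_paths "P ` {..<k}" link E
proof unfold_locales
  show "E x y \<longleftrightarrow> (\<exists>p\<in>P ` {..<k}. path_edge p x y) \<or> link x y" for x y
    unfolding E_iff link_def by blast
  show "link x y \<Longrightarrow> p \<in> P ` {..<k} \<Longrightarrow> w \<in> {x, y} \<Longrightarrow> w \<in> set p \<Longrightarrow>
      w = hd p \<or> w = last p" for x y p w
    unfolding link_def using RA_edge RB_iff apex_off_P by auto
qed (use P_distinct P_nonempty in auto, metis P_disjoint imageE lessThan_iff)

lemma hole_via_apex:
  assumes "RB i j"
  shows "is_hole V E (concat [[z], P i, rev (P j)])" (is "is_hole V E (concat ?bs)")
proof (rule is_hole_concat_blocks)
  have ij: "i < k" "j < k" "i \<noteq> j" "\<not> RA i j" "\<not> RA j i"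
    using assms RA_sym unfolding RB_iff by auto
  show "path_blocks ?bs"
    unfolding path_blocks_def using ij apex_off_P by auto
  show "distinct (concat ?bs)"
    using ij P_distinct apex_off_P P_disjoint by auto
  show "4 \<le> length (concat ?bs)"
    using P_length[OF ij(1)] P_length[OF ij(2)] by simp
  show "set (concat ?bs) \<subseteq> V"
    using ij V_eq by auto
  show "\<forall>x\<in>hd ` set ?bs \<union> last ` set ?bs. \<forall>y\<in>hd ` set ?bs \<union> last ` set ?bs.
      link x y \<longleftrightarrow> symclp (joins (?bs @ [hd ?bs])) x y"
    using ij assms RB_sym[OF assms] by (auto simp: symclp_def hd_rev last_rev)
qed simp

lemma hole_via_B_vertex:
  assumes "RA i j" and "RB i t" and "RB t j"
  shows "is_hole V E (concat [P i, [last (P t)], rev (P j)])" (is "is_hole V E (concat ?bs)")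
proof (rule is_hole_concat_blocks)
  have ij: "i < k" "j < k" "i \<noteq> j" "\<not> RB i j" "\<not> RB j i" "RA j i"
    using assms(1) RA_edge RA_sym unfolding RB_iff by auto
  have t: "t < k" "t \<noteq> i" "t \<noteq> j" using assms(2,3) unfolding RB_iff by auto
  have "set (P t) \<inter> set (concat ?bs) \<subseteq> {last (P t)}"
    using P_disjoint[of t i] P_disjoint[of t j] ij t by auto
  then show "path_blocks ?bs"
    unfolding path_blocks_def using ij t by auto
  show "distinct (concat ?bs)"
    using ij t P_distinct P_disjoint by auto
  show "4 \<le> length (concat ?bs)"
    using P_length[OF ij(1)] P_length[OF ij(2)] by simp
  show "set (concat ?bs) \<subseteq> V"
    using ij t V_eq P_nonempty by auto
  show "\<forall>x\<in>hd ` set ?bs \<union> last ` set ?bs. \<forall>y\<in>hd ` set ?bs \<union> last ` set ?bs.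
      link x y \<longleftrightarrow> symclp (joins (?bs @ [hd ?bs])) x y"
    using ij t assms RB_sym[OF assms(2)] RB_sym[OF assms(3)]
    by (auto simp: symclp_def hd_rev last_rev)
qed simp

lemma hole_through_apex_and_path:
  assumes "i < k"
  shows "\<exists>cs. is_hole V E cs \<and> z \<in> set cs \<and> set (P i) \<subseteq> set cs"
proof -
  obtain i' where "i' < k" "i' \<noteq> i"
    using two_paths by (intro that[of "if i = 0 then 1 else 0"]) auto
  then obtain j where "RB i j" using B_connected assms by (auto elim: connected_onE_neighbour)
  with hole_via_apex show ?thesis by fastforce
qed

lemma hole_through_two_paths:
  assumes "i < k" and "j < k"
  shows "\<exists>cs. is_hole V E cs \<and> set (P i) \<subseteq> set cs \<and> set (P j) \<subseteq> set cs"
proof -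
  consider "i = j" | "RB i j" | "RA i j" using assms unfolding RB_iff by blast
  then show ?thesis
  proof cases
    case 1
    with hole_through_apex_and_path[OF assms(1)] show ?thesis by blast
  next
    case 2
    with hole_via_apex show ?thesis by fastforce
  next
    case 3
    then obtain t where "RB i t" "RB t j"
      using B.common_neighbour[OF B_connected] assms RA_edge unfolding RB_iff by (metis lessThan_iff)
    with hole_via_B_vertex[OF 3] show ?thesis by fastforce
  qed
qed

theorem hole_through_vertices:
  assumes "u \<in> V" and "v \<in> V"
  shows "\<exists>cs. is_hole V E cs \<and> u \<in> set cs \<and> v \<in> set cs"
proof (cases "u = z \<or> v = z")
  case True
  moreover obtain i where "i < k" "u \<in> insert z (set (P i))" "v \<in> insert z (set (P i))"
    using assms True two_paths unfolding V_eq by fastforce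
  ultimately show ?thesis using hole_through_apex_and_path by blast
next
  case False
  then obtain i j where "i < k" "j < k" "u \<in> set (P i)" "v \<in> set (P j)"
    using assms unfolding V_eq by blast
  with hole_through_two_paths show ?thesis by blast
qed

end

section \<open>Even frames\<close>

locale even_frame =
  fixes n m :: nat and P Q :: "nat \<Rightarrow> 'a list" and R :: "nat \<Rightarrow> nat \<Rightarrow> bool"
    and za zb :: 'a and V :: "'a set" and E :: "'a \<Rightarrow> 'a \<Rightarrow> bool"
  assumes two_P: "2 \<le> n"
    and P_length: "i < n \<Longrightarrow> 2 \<le> length (P i)"
    and Q_length: "j < m \<Longrightarrow> 2 \<le> length (Q j)"
    and P_distinct: "i < n \<Longrightarrow> distinct (P i)"
    and Q_distinct: "j < m \<Longrightarrow> distinct (Q j)"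
    and P_disjoint: "i < n \<Longrightarrow> i' < n \<Longrightarrow> x \<in> set (P i) \<Longrightarrow> x \<in> set (P i') \<Longrightarrow> i = i'"
    and Q_disjoint: "j < m \<Longrightarrow> j' < m \<Longrightarrow> x \<in> set (Q j) \<Longrightarrow> x \<in> set (Q j') \<Longrightarrow> j = j'"
    and P_Q_disjoint: "i < n \<Longrightarrow> j < m \<Longrightarrow> x \<in> set (P i) \<Longrightarrow> x \<notin> set (Q j)"
    and apexes_off_P: "i < n \<Longrightarrow> za \<notin> set (P i) \<and> zb \<notin> set (P i)"
    and apexes_off_Q: "j < m \<Longrightarrow> za \<notin> set (Q j) \<and> zb \<notin> set (Q j)"
    and apexes_distinct: "za \<noteq> zb"
    and R_zero_row: "\<exists>i<n. \<forall>j<m. \<not> R i j"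
    and R_full_row: "\<exists>i<n. \<forall>j<m. R i j"
    and V_eq: "V = {za, zb} \<union> (\<Union>i<n. set (P i)) \<union> (\<Union>j<m. set (Q j))"
    and E_iff: "E x y \<longleftrightarrow>
          (\<exists>i<n. path_edge (P i) x y) \<or>
          (\<exists>j<m. path_edge (Q j) x y) \<or>
          (\<exists>j<m. \<exists>j'<m. j \<noteq> j' \<and> x = hd (Q j) \<and> y = hd (Q j')) \<or>
          (\<exists>j<m. \<exists>j'<m. j \<noteq> j' \<and> x = last (Q j) \<and> y = last (Q j')) \<or>
          (\<exists>i<n. \<exists>j<m. R i j \<and>
             ((x = hd (P i) \<and> y = hd (Q j)) \<or> (y = hd (P i) \<and> x = hd (Q j)))) \<or>
          (\<exists>i<n. \<exists>j<m. \<not> R i j \<and>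
             ((x = last (P i) \<and> y = last (Q j)) \<or> (y = last (P i) \<and> x = last (Q j)))) \<or>
          (\<exists>w. ((x = za \<and> y = w) \<or> (y = za \<and> x = w)) \<and>
             w \<in> (\<lambda>i. hd (P i)) ` {..<n} \<union> (\<lambda>j. hd (Q j)) ` {..<m}) \<or>
          (\<exists>w. ((x = zb \<and> y = w) \<or> (y = zb \<and> x = w)) \<and>
             w \<in> (\<lambda>i. last (P i)) ` {..<n} \<union> (\<lambda>j. last (Q j)) ` {..<m})"
begin

definition link :: "'a \<Rightarrow> 'a \<Rightarrow> bool" where
  "link x y \<longleftrightarrow>
     (\<exists>j<m. \<exists>j'<m. j \<noteq> j' \<and> x = hd (Q j) \<and> y = hd (Q j')) \<or>
     (\<exists>j<m. \<exists>j'<m. j \<noteq> j' \<and> x = last (Q j) \<and> y = last (Q j')) \<or>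
     (\<exists>i<n. \<exists>j<m. R i j \<and> ((x = hd (P i) \<and> y = hd (Q j)) \<or> (y = hd (P i) \<and> x = hd (Q j)))) \<or>
     (\<exists>i<n. \<exists>j<m. \<not> R i j \<and>
        ((x = last (P i) \<and> y = last (Q j)) \<or> (y = last (P i) \<and> x = last (Q j)))) \<or>
     (\<exists>w. ((x = za \<and> y = w) \<or> (y = za \<and> x = w)) \<and>
        w \<in> (\<lambda>i. hd (P i)) ` {..<n} \<union> (\<lambda>j. hd (Q j)) ` {..<m}) \<or>
     (\<exists>w. ((x = zb \<and> y = w) \<or> (y = zb \<and> x = w)) \<and>
        w \<in> (\<lambda>i. last (P i)) ` {..<n} \<union> (\<lambda>j. last (Q j)) ` {..<m})"

lemma P_nonempty: "i < n \<Longrightarrow> P i \<noteq> []" and Q_nonempty: "j < m \<Longrightarrow> Q j \<noteq> []"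
  using P_length[of i] Q_length[of j] by auto

lemma P_ends_in_P_iff [simp]:
  assumes "i < n" "i' < n"
  shows "hd (P i) \<in> set (P i') \<longleftrightarrow> i = i'" "last (P i) \<in> set (P i') \<longleftrightarrow> i = i'"
  using assms P_disjoint[of i i'] hd_in_set[OF P_nonempty] last_in_set[OF P_nonempty] by blast+

lemma Q_ends_in_Q_iff [simp]:
  assumes "j < m" "j' < m"
  shows "hd (Q j) \<in> set (Q j') \<longleftrightarrow> j = j'" "last (Q j) \<in> set (Q j') \<longleftrightarrow> j = j'"
  using assms Q_disjoint[of j j'] hd_in_set[OF Q_nonempty] last_in_set[OF Q_nonempty] by blast+

lemma P_Q_ends_notin [simp]:
  assumes "i < n" "j < m"
  shows "hd (P i) \<notin> set (Q j)" "last (P i) \<notin> set (Q j)"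
    and "hd (Q j) \<notin> set (P i)" "last (Q j) \<notin> set (P i)"
  using assms P_Q_disjoint[of i j] hd_in_set[OF P_nonempty] last_in_set[OF P_nonempty]
    hd_in_set[OF Q_nonempty] last_in_set[OF Q_nonempty] by blast+

lemma P_ends_eq_iff [simp]:
  assumes "i < n" "i' < n"
  shows "hd (P i) = hd (P i') \<longleftrightarrow> i = i'" "last (P i) = last (P i') \<longleftrightarrow> i = i'"
    and "hd (P i) \<noteq> last (P i')"
  using P_ends_in_P_iff[OF assms] hd_in_set[OF P_nonempty[OF assms(2)]]
    last_in_set[OF P_nonempty[OF assms(2)]] hd_neq_last[OF P_length[OF assms(2)] P_distinct[OF assms(2)]]
  by auto

lemma Q_ends_eq_iff [simp]:
  assumes "j < m" "j' < m"
  shows "hd (Q j) = hd (Q j') \<longleftrightarrow> j = j'" "last (Q j) = last (Q j') \<longleftrightarrow> j = j'"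
    and "hd (Q j) \<noteq> last (Q j')"
  using Q_ends_in_Q_iff[OF assms] hd_in_set[OF Q_nonempty[OF assms(2)]]
    last_in_set[OF Q_nonempty[OF assms(2)]] hd_neq_last[OF Q_length[OF assms(2)] Q_distinct[OF assms(2)]]
  by auto

lemma P_Q_ends_neq:
  assumes "i < n" "j < m"
  shows "hd (P i) \<noteq> hd (Q j)" "hd (P i) \<noteq> last (Q j)"
    and "last (P i) \<noteq> hd (Q j)" "last (P i) \<noteq> last (Q j)"
  using P_Q_ends_notin[OF assms] hd_in_set[OF Q_nonempty[OF assms(2)]]
    last_in_set[OF Q_nonempty[OF assms(2)]] by metis+

lemma apexes_neq_P_ends:
  "i < n \<Longrightarrow> hd (P i) \<noteq> za" "i < n \<Longrightarrow> hd (P i) \<noteq> zb"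
  "i < n \<Longrightarrow> last (P i) \<noteq> za" "i < n \<Longrightarrow> last (P i) \<noteq> zb"
  using apexes_off_P[of i] P_nonempty[of i] by auto

lemma apexes_neq_Q_ends:
  "j < m \<Longrightarrow> hd (Q j) \<noteq> za" "j < m \<Longrightarrow> hd (Q j) \<noteq> zb"
  "j < m \<Longrightarrow> last (Q j) \<noteq> za" "j < m \<Longrightarrow> last (Q j) \<noteq> zb"
  using apexes_off_Q[of j] Q_nonempty[of j] by auto

lemmas ends_distinct [simp] =
  P_ends_eq_iff(3)[symmetric] Q_ends_eq_iff(3)[symmetric] P_Q_ends_neq P_Q_ends_neq[symmetric]
  apexes_neq_P_ends apexes_neq_P_ends[symmetric] apexes_neq_Q_ends apexes_neq_Q_ends[symmetric]
  apexes_distinct apexes_distinct[symmetric]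

lemma link_between_ends:
  assumes "link x y" and "w \<in> {x, y}"
  shows "w \<in> {za, zb} \<union> (\<Union>i<n. {hd (P i), last (P i)}) \<union> (\<Union>j<m. {hd (Q j), last (Q j)})"
  using assms unfolding link_def by blast

sublocale linked_paths "P ` {..<n} \<union> Q ` {..<m}" link E
proof unfold_locales
  show "distinct p" if "p \<in> P ` {..<n} \<union> Q ` {..<m}" for p
    using that P_distinct Q_distinct by auto
  show "p \<noteq> []" if "p \<in> P ` {..<n} \<union> Q ` {..<m}" for p
    using that P_nonempty Q_nonempty by (metis UnE imageE lessThan_iff)
  show "p = q" if "p \<in> P ` {..<n} \<union> Q ` {..<m}" "q \<in> P ` {..<n} \<union> Q ` {..<m}"
    "x \<in> set p" "x \<in> set q" for p q x
    using that P_Q_disjoint P_disjoint Q_disjoint by blast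
  show "w = hd p \<or> w = last p"
    if "link x y" "p \<in> P ` {..<n} \<union> Q ` {..<m}" "w \<in> {x, y}" "w \<in> set p" for x y p w
  proof -
    from that(2) consider (P) s where "s < n" "p = P s" | (Q) s where "s < m" "p = Q s"
      by blast
    then show ?thesis
    proof cases
      case P
      then show ?thesis using link_between_ends[OF that(1,3)] that(4) apexes_off_P[OF P(1)] by auto
    next
      case Q
      then show ?thesis using link_between_ends[OF that(1,3)] that(4) apexes_off_Q[OF Q(1)] by auto
    qed
  qed
  have "(\<exists>p\<in>P ` {..<n} \<union> Q ` {..<m}. path_edge p x y) \<longleftrightarrow>
      (\<exists>i<n. path_edge (P i) x y) \<or> (\<exists>j<m. path_edge (Q j) x y)" for x y
    by blast
  then show "E x y \<longleftrightarrow> (\<exists>p\<in>P ` {..<n} \<union> Q ` {..<m}. path_edge p x y) \<or> link x y" for x y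
    unfolding E_iff link_def by (simp only: disj_assoc)
qed

lemma link_P_P [simp]:
  assumes "i < n" "i' < n"
  shows "\<not> link (hd (P i)) (hd (P i'))" "\<not> link (last (P i)) (last (P i'))"
    and "\<not> link (hd (P i)) (last (P i'))" "\<not> link (last (P i)) (hd (P i'))"
  using assms unfolding link_def by auto

lemma link_Q_Q [simp]:
  assumes "j < m" "j' < m"
  shows "link (hd (Q j)) (hd (Q j')) \<longleftrightarrow> j \<noteq> j'" "link (last (Q j)) (last (Q j')) \<longleftrightarrow> j \<noteq> j'"
    and "\<not> link (hd (Q j)) (last (Q j'))" "\<not> link (last (Q j)) (hd (Q j'))"
  using assms unfolding link_def by auto

lemma link_P_Q [simp]:
  assumes "i < n" "j < m"
  shows "link (hd (P i)) (hd (Q j)) \<longleftrightarrow> R i j" "link (hd (Q j)) (hd (P i)) \<longleftrightarrow> R i j"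
    and "link (last (P i)) (last (Q j)) \<longleftrightarrow> \<not> R i j" "link (last (Q j)) (last (P i)) \<longleftrightarrow> \<not> R i j"
    and "\<not> link (hd (P i)) (last (Q j))" "\<not> link (last (Q j)) (hd (P i))"
    and "\<not> link (last (P i)) (hd (Q j))" "\<not> link (hd (Q j)) (last (P i))"
  using assms unfolding link_def by auto

lemma link_apex_P [simp]:
  assumes "i < n"
  shows "link za (hd (P i))" "link (hd (P i)) za" "link zb (last (P i))" "link (last (P i)) zb"
    and "\<not> link za (last (P i))" "\<not> link (last (P i)) za"
    and "\<not> link zb (hd (P i))" "\<not> link (hd (P i)) zb"
  using assms unfolding link_def by auto

lemma link_apex_Q [simp]:
  assumes "j < m"
  shows "link za (hd (Q j))" "link (hd (Q j)) za" "link zb (last (Q j))" "link (last (Q j)) zb"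
    and "\<not> link za (last (Q j))" "\<not> link (last (Q j)) za"
    and "\<not> link zb (hd (Q j))" "\<not> link (hd (Q j)) zb"
  using assms unfolding link_def by auto

lemma link_apexes [simp]: "\<not> link za zb" "\<not> link zb za" "\<not> link za za" "\<not> link zb zb"
  unfolding link_def by auto

lemma hole_via_apexes:
  assumes i: "i < n" "i' < n" "i \<noteq> i'"
  shows "is_hole V E (concat [[za], P i, [zb], rev (P i')])" (is "is_hole V E (concat ?bs)")
proof (rule is_hole_concat_blocks)
  show "path_blocks ?bs"
    unfolding path_blocks_def using i apexes_off_P apexes_off_Q by auto
  show "distinct (concat ?bs)"
    using i P_distinct apexes_off_P apexes_distinct P_disjoint[of i i'] by auto
  show "4 \<le> length (concat ?bs)"
    using P_length[OF i(1)] P_length[OF i(2)] by simp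
  show "set (concat ?bs) \<subseteq> V"
    using i V_eq by auto
  show "\<forall>x\<in>hd ` set ?bs \<union> last ` set ?bs. \<forall>y\<in>hd ` set ?bs \<union> last ` set ?bs.
      link x y \<longleftrightarrow> symclp (joins (?bs @ [hd ?bs])) x y"
    using i by (auto simp: symclp_def hd_rev last_rev)
qed simp

lemma hole_via_Q_paths:
  assumes j: "j < m" "j' < m" "j \<noteq> j'"
  shows "is_hole V E (concat [Q j, rev (Q j')])" (is "is_hole V E (concat ?bs)")
proof (rule is_hole_concat_blocks)
  show "path_blocks ?bs"
    unfolding path_blocks_def using j by auto
  show "distinct (concat ?bs)"
    using j Q_distinct Q_disjoint[of j j'] by auto
  show "4 \<le> length (concat ?bs)"
    using Q_length[OF j(1)] Q_length[OF j(2)] by simp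
  show "set (concat ?bs) \<subseteq> V"
    using j V_eq by auto
  show "\<forall>x\<in>hd ` set ?bs \<union> last ` set ?bs. \<forall>y\<in>hd ` set ?bs \<union> last ` set ?bs.
      link x y \<longleftrightarrow> symclp (joins (?bs @ [hd ?bs])) x y"
    using j by (auto simp: symclp_def hd_rev last_rev)
qed simp

lemma hole_via_B_apex:
  assumes ij: "i < n" "j < m" and "R i j"
  shows "is_hole V E (concat [P i, [zb], rev (Q j)])" (is "is_hole V E (concat ?bs)")
proof (rule is_hole_concat_blocks)
  show "path_blocks ?bs"
    unfolding path_blocks_def using ij apexes_off_P apexes_off_Q by auto
  show "distinct (concat ?bs)"
    using ij P_distinct Q_distinct apexes_off_P apexes_off_Q P_Q_disjoint[OF ij] by auto
  show "4 \<le> length (concat ?bs)"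
    using P_length[OF ij(1)] Q_length[OF ij(2)] by simp
  show "set (concat ?bs) \<subseteq> V"
    using ij V_eq by auto
  show "\<forall>x\<in>hd ` set ?bs \<union> last ` set ?bs. \<forall>y\<in>hd ` set ?bs \<union> last ` set ?bs.
      link x y \<longleftrightarrow> symclp (joins (?bs @ [hd ?bs])) x y"
    using ij \<open>R i j\<close> by (auto simp: symclp_def hd_rev last_rev)
qed simp

lemma hole_via_A_apex:
  assumes ij: "i < n" "j < m" and "\<not> R i j"
  shows "is_hole V E (concat [[za], Q j, rev (P i)])" (is "is_hole V E (concat ?bs)")
proof (rule is_hole_concat_blocks)
  show "path_blocks ?bs"
    unfolding path_blocks_def using ij apexes_off_P apexes_off_Q by auto
  show "distinct (concat ?bs)"
    using ij P_distinct Q_distinct apexes_off_P apexes_off_Q P_Q_disjoint[OF ij] by auto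
  show "4 \<le> length (concat ?bs)"
    using P_length[OF ij(1)] Q_length[OF ij(2)] by simp
  show "set (concat ?bs) \<subseteq> V"
    using ij V_eq by auto
  show "\<forall>x\<in>hd ` set ?bs \<union> last ` set ?bs. \<forall>y\<in>hd ` set ?bs \<union> last ` set ?bs.
      link x y \<longleftrightarrow> symclp (joins (?bs @ [hd ?bs])) x y"
    using ij \<open>\<not> R i j\<close> by (auto simp: symclp_def hd_rev last_rev)
qed simp

lemma hole_through_apexes_and_P_paths:
  assumes "i < n" and "i' < n"
  shows "\<exists>cs. is_hole V E cs \<and> {za, zb} \<union> set (P i) \<union> set (P i') \<subseteq> set cs"
proof (cases "i = i'")
  case True
  obtain i'' where "i'' < n" "i'' \<noteq> i"
    using two_P by (intro that[of "if i = 0 then 1 else 0"]) auto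
  with hole_via_apexes[OF assms(1)] True show ?thesis by fastforce
next
  case False
  with hole_via_apexes[OF assms] show ?thesis by fastforce
qed

lemma hole_through_P_and_Q_paths:
  assumes "i < n" and "j < m"
  shows "\<exists>cs. is_hole V E cs \<and> set (P i) \<union> set (Q j) \<subseteq> set cs"
proof (cases "R i j")
  case True
  with hole_via_B_apex[OF assms] show ?thesis by fastforce
next
  case False
  with hole_via_A_apex[OF assms] show ?thesis by fastforce
qed

lemma hole_through_vertex_and_Q_path:
  assumes "x \<in> V" and "j < m"
  shows "\<exists>cs. is_hole V E cs \<and> x \<in> set cs \<and> set (Q j) \<subseteq> set cs"
proof -
  consider "x = za" | "x = zb" | i where "i < n" "x \<in> set (P i)" | "x \<in> set (Q j)"
    | j' where "j' < m" "j' \<noteq> j" "x \<in> set (Q j')"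
    using assms(1) unfolding V_eq by blast
  then show ?thesis
  proof cases
    case 1
    obtain i where "i < n" "\<not> R i j" using R_zero_row assms(2) by blast
    with hole_via_A_apex[OF _ assms(2)] 1 show ?thesis by fastforce
  next
    case 2
    obtain i where "i < n" "R i j" using R_full_row assms(2) by blast
    with hole_via_B_apex[OF _ assms(2)] 2 show ?thesis by fastforce
  next
    case (3 i)
    with hole_through_P_and_Q_paths[OF 3(1) assms(2)] show ?thesis by blast
  next
    case 4
    have "0 < n" using two_P by simp
    with hole_through_P_and_Q_paths[OF _ assms(2)] 4 show ?thesis by blast
  next
    case (5 j')
    with hole_via_Q_paths[OF assms(2) 5(1)] show ?thesis by fastforce
  qed
qed

theorem hole_through_vertices:
  assumes "u \<in> V" and "v \<in> V"
  shows "\<exists>cs. is_hole V E cs \<and> u \<in> set cs \<and> v \<in> set cs"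
proof (cases "\<exists>j<m. u \<in> set (Q j) \<or> v \<in> set (Q j)")
  case True
  then show ?thesis using hole_through_vertex_and_Q_path assms by blast
next
  case False
  have P_side: "\<exists>i<n. x \<in> {za, zb} \<union> set (P i)" if "x \<in> V" "\<forall>j<m. x \<notin> set (Q j)" for x
  proof (cases "x \<in> {za, zb}")
    case True
    moreover have "0 < n" using two_P by simp
    ultimately show ?thesis by blast
  next
    case False
    then show ?thesis using that unfolding V_eq by blast
  qed
  obtain i where i: "i < n" "u \<in> {za, zb} \<union> set (P i)"
    using P_side[OF assms(1)] False by blast
  obtain i' where i': "i' < n" "v \<in> {za, zb} \<union> set (P i')"
    using P_side[OF assms(2)] False by blast
  obtain cs where "is_hole V E cs" "{za, zb} \<union> set (P i) \<union> set (P i') \<subseteq> set cs"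
    using hole_through_apexes_and_P_paths[OF i(1) i'(1)] by blast
  then show ?thesis using i(2) i'(2) by blast
qed

end

section \<open>Apexed frames\<close>

lemma odd_apexed_frame_hole_through:
  assumes "odd_apexed_frame l V E" and "u \<in> V" and "v \<in> V"
  shows "\<exists>cs. is_hole V E cs \<and> u \<in> set cs \<and> v \<in> set cs"
proof -
  obtain k P RA RB z where
    "5 \<le> l" and "3 \<le> k" and len: "\<forall>i<k. length (P i) = (l - 3) div 2 + 1"
    and dist: "distinct (concat (map P [0..<k]) @ [z])"
    and RA_edge: "\<forall>i j. RA i j \<longrightarrow> i < k \<and> j < k \<and> i \<noteq> j"
    and RA_sym: "\<forall>i j. RA i j \<longrightarrow> RA j i"
    and RB_iff: "\<forall>i j. RB i j \<longleftrightarrow> i < k \<and> j < k \<and> i \<noteq> j \<and> \<not> RA i j"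
    and A_threshold: "threshold_on {..<k} RA" and B_threshold: "threshold_on {..<k} RB"
    and V_eq: "V = insert z (\<Union>i<k. set (P i))"
    and E_iff: "\<forall>x y. E x y \<longleftrightarrow>
          (\<exists>i<k. path_edge (P i) x y) \<or>
          (\<exists>i<k. \<exists>j<k. RA i j \<and> x = hd (P i) \<and> y = hd (P j)) \<or>
          (\<exists>i<k. \<exists>j<k. RB i j \<and> x = last (P i) \<and> y = last (P j)) \<or>
          (\<exists>w. ((x = z \<and> y = w) \<or> (y = z \<and> x = w)) \<and>
             ((\<not> connected_on {..<k} RA \<and> (\<exists>i<k. w = hd (P i))) \<or>
              (\<not> connected_on {..<k} RB \<and> (\<exists>i<k. w = last (P i)))))"
    using assms(1) unfolding odd_apexed_frame_def by (elim conjE exE) (rule that; assumption)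
  note RA_edge = RA_edge[rule_format] and RA_sym = RA_sym[rule_format] and RB_iff = RB_iff[rule_format]
  have two_paths: "2 \<le> k" using \<open>3 \<le> k\<close> by simp
  have P_length: "2 \<le> length (P i)" if "i < k" for i using len \<open>5 \<le> l\<close> that by auto
  have P_distinct: "distinct (P i)"
    and P_disjoint: "j < k \<Longrightarrow> x \<in> set (P i) \<Longrightarrow> x \<in> set (P j) \<Longrightarrow> i = j"
    if "i < k" for i j x
    using distinct_concat_map_upt[of P k i] dist that by auto
  have apex_off_P: "z \<notin> set (P i)" if "i < k" for i using dist that by auto
  have RB_sym: "RB i j \<Longrightarrow> RB j i" for i j using RA_sym RB_iff by blast
  have RA_iff: "RA i j \<longleftrightarrow> i < k \<and> j < k \<and> i \<noteq> j \<and> \<not> RB i j" for i j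
    using RA_edge RB_iff by blast
  interpret A: threshold_graph "{..<k}" RA
    using A_threshold RA_edge RA_sym by unfold_locales auto
  have "connected_on {..<k} RB \<longleftrightarrow> \<not> connected_on {..<k} RA"
    using A.complement_connected_iff[of RB] two_paths RB_iff by simp
  then consider
      (A_disconnected) "\<not> connected_on {..<k} RA" "connected_on {..<k} RB"
    | (B_disconnected) "\<not> connected_on {..<k} RB" "connected_on {..<k} RA"
    by blast
  then show ?thesis
  proof cases
    case A_disconnected
    interpret odd_frame k P RA RB z V E
    proof (unfold_locales; (fact)?)
      show "E x y \<longleftrightarrow> (\<exists>i<k. path_edge (P i) x y) \<or>
        (\<exists>i<k. \<exists>j<k. RA i j \<and> x = hd (P i) \<and> y = hd (P j)) \<or>
        (\<exists>i<k. \<exists>j<k. RB i j \<and> x = last (P i) \<and> y = last (P j)) \<or>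
        (\<exists>i<k. (x = z \<and> y = hd (P i)) \<or> (y = z \<and> x = hd (P i)))" for x y
        using E_iff A_disconnected by blast
    qed
    show ?thesis using hole_through_vertices assms(2,3) .
  next
    case B_disconnected
    \<comment> \<open>reversing every path exchanges the roles of A and B\<close>
    interpret odd_frame k "\<lambda>i. rev (P i)" RB RA z V E
    proof (unfold_locales; (fact)?)
      show "2 \<le> length (rev (P i))" "distinct (rev (P i))" "z \<notin> set (rev (P i))" if "i < k" for i
        using P_length P_distinct apex_off_P that by simp_all
      show "i = j" if "i < k" "j < k" "x \<in> set (rev (P i))" "x \<in> set (rev (P j))" for i j x
        using P_disjoint that by simp
      show "RB i j \<Longrightarrow> i < k \<and> j < k \<and> i \<noteq> j" for i j
        using RB_iff by blast
      show "V = insert z (\<Union>i<k. set (rev (P i)))" using V_eq by simp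
      have "E x y \<longleftrightarrow> (\<exists>i<k. path_edge (P i) x y) \<or>
        (\<exists>i<k. \<exists>j<k. RA i j \<and> x = hd (P i) \<and> y = hd (P j)) \<or>
        (\<exists>i<k. \<exists>j<k. RB i j \<and> x = last (P i) \<and> y = last (P j)) \<or>
        (\<exists>i<k. (x = z \<and> y = last (P i)) \<or> (y = z \<and> x = last (P i)))" for x y
        using E_iff B_disconnected by blast
      then show "E x y \<longleftrightarrow> (\<exists>i<k. path_edge (rev (P i)) x y) \<or>
        (\<exists>i<k. \<exists>j<k. RB i j \<and> x = hd (rev (P i)) \<and> y = hd (rev (P j))) \<or>
        (\<exists>i<k. \<exists>j<k. RA i j \<and> x = last (rev (P i)) \<and> y = last (rev (P j))) \<or>
        (\<exists>i<k. (x = z \<and> y = hd (rev (P i))) \<or> (y = z \<and> x = hd (rev (P i))))" for x y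
        by (simp add: hd_rev last_rev) blast
    qed
    show ?thesis using hole_through_vertices assms(2,3) .
  qed
qed

lemma even_apexed_frame_hole_through:
  assumes "even_apexed_frame l V E" and "u \<in> V" and "v \<in> V"
  shows "\<exists>cs. is_hole V E cs \<and> u \<in> set cs \<and> v \<in> set cs"
proof -
  obtain n m P Q R za zb i0 i1 where
    "6 \<le> l" and two_P: "2 \<le> n"
    and P_len: "\<forall>i<n. length (P i) = (l div 2 - 2) + 1"
    and Q_len: "\<forall>j<m. length (Q j) = (l div 2 - 1) + 1"
    and dist: "distinct (concat (map P [0..<n]) @ concat (map Q [0..<m]) @ [za, zb])"
    and zero_row: "i0 < n" "\<forall>j<m. \<not> R i0 j" and full_row: "i1 < n" "\<forall>j<m. R i1 j"
    and V_eq: "V = {za, zb} \<union> (\<Union>i<n. set (P i)) \<union> (\<Union>j<m. set (Q j))"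
    and E_iff: "\<forall>x y. E x y \<longleftrightarrow>
          (\<exists>i<n. path_edge (P i) x y) \<or>
          (\<exists>j<m. path_edge (Q j) x y) \<or>
          (\<exists>j<m. \<exists>j'<m. j \<noteq> j' \<and> x = hd (Q j) \<and> y = hd (Q j')) \<or>
          (\<exists>j<m. \<exists>j'<m. j \<noteq> j' \<and> x = last (Q j) \<and> y = last (Q j')) \<or>
          (\<exists>i<n. \<exists>j<m. R i j \<and>
             ((x = hd (P i) \<and> y = hd (Q j)) \<or> (y = hd (P i) \<and> x = hd (Q j)))) \<or>
          (\<exists>i<n. \<exists>j<m. \<not> R i j \<and>
             ((x = last (P i) \<and> y = last (Q j)) \<or> (y = last (P i) \<and> x = last (Q j)))) \<or>
          (\<exists>w. ((x = za \<and> y = w) \<or> (y = za \<and> x = w)) \<and>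
             w \<in> (\<lambda>i. hd (P i)) ` {..<n} \<union> (\<lambda>j. hd (Q j)) ` {..<m}) \<or>
          (\<exists>w. ((x = zb \<and> y = w) \<or> (y = zb \<and> x = w)) \<and>
             w \<in> (\<lambda>i. last (P i)) ` {..<n} \<union> (\<lambda>j. last (Q j)) ` {..<m})"
    using assms(1) unfolding even_apexed_frame_def
    by (elim conjE exE) (rule that; assumption)
  have P_concat: "distinct (concat (map P [0..<n]))" and Q_concat: "distinct (concat (map Q [0..<m]))"
    and P_Q: "set (concat (map P [0..<n])) \<inter> set (concat (map Q [0..<m])) = {}"
    and apexes: "za \<notin> set (concat (map P [0..<n]))" "zb \<notin> set (concat (map P [0..<n]))"
      "za \<notin> set (concat (map Q [0..<m]))" "zb \<notin> set (concat (map Q [0..<m]))" "za \<noteq> zb"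
    using dist by auto
  interpret even_frame n m P Q R za zb V E
  proof (unfold_locales; (fact | (rule E_iff[rule_format]))?)
    show "2 \<le> length (P i)" if "i < n" for i using P_len \<open>6 \<le> l\<close> that by auto
    show "2 \<le> length (Q j)" if "j < m" for j using Q_len \<open>6 \<le> l\<close> that by auto
    show "distinct (P i)" if "i < n" for i using distinct_concat_map_upt[OF P_concat that] by blast
    show "distinct (Q j)" if "j < m" for j using distinct_concat_map_upt[OF Q_concat that] by blast
    show "i = i'" if "i < n" "i' < n" "x \<in> set (P i)" "x \<in> set (P i')" for i i' x
      using distinct_concat_map_upt[OF P_concat that(1)] that(2-4) by blast
    show "j = j'" if "j < m" "j' < m" "x \<in> set (Q j)" "x \<in> set (Q j')" for j j' x
      using distinct_concat_map_upt[OF Q_concat that(1)] that(2-4) by blast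
    show "x \<notin> set (Q j)" if "i < n" "j < m" "x \<in> set (P i)" for i j x
      using P_Q that by (auto simp: atLeast0LessThan)
    show "za \<notin> set (P i) \<and> zb \<notin> set (P i)" if "i < n" for i
      using apexes that by (auto simp: atLeast0LessThan)
    show "za \<notin> set (Q j) \<and> zb \<notin> set (Q j)" if "j < m" for j
      using apexes that by (auto simp: atLeast0LessThan)
    show "\<exists>i<n. \<forall>j<m. \<not> R i j" "\<exists>i<n. \<forall>j<m. R i j"
      using zero_row full_row by blast+
  qed
  show ?thesis using hole_through_vertices assms(2,3) .
qed

theorem mainTheorem13:
  fixes l :: nat and V :: "'a set" and E :: "'a \<Rightarrow> 'a \<Rightarrow> bool" and u v :: 'a
  assumes "apexed_frame l V E" and "u \<in> V" and "v \<in> V"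
  shows "\<exists>cs. is_hole V E cs \<and> u \<in> set cs \<and> v \<in> set cs"
  using assms(1) odd_apexed_frame_hole_through[OF _ assms(2,3)]
    even_apexed_frame_hole_through[OF _ assms(2,3)]
  unfolding apexed_frame_def by blast

end
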